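(* Let $T$ be a locally finite triangulation of the $\infty$-gon (so $T$ consists of finite arcs only), and let $\mathcal{T}$ be the subcategory of $\mathcal{C}_2$ whose indecomposable objects correspond to the arcs of $T$ (a maximal rigid subcategory of $\mathcal{C}_2$). Then $\mathcal{T}$ is not precovering in $\mathcal{C}_2$, and hence not functorially finite.
   Context: Let $R=\mathbb{C}[x,y]/(x^2)$, graded with $\deg x=1$, $\deg y=-1$; $M(j)_n=M_{j+n}$. $\mathcal{C}_2$ is the Frobenius category of finitely generated $\mathbb{Z}$-graded maximal Cohen–Macaulay $R$-modules with degree-preserving morphisms. Arcs $(a,b)$, $a\in\mathbb{Z}\cup\{-\infty\}$, $b\in\mathbb{Z}$, $a<b$, correspond to indecomposables via $(x,y^k)(j)\leftrightarrow(-j-k,1-j)$ ($k\ge0$, $(x,y^0)=R$) and $\mathbb{C}[y](j)=(R/(x))(j)\leftrightarrow(-\infty,-j)$; arcs of the $\infty$-gon are those with $a\in\mathbb{Z}$. Arcs $(a,b),(c,d)$ cross if $a<c<b<d$ or $c<a<d<b$; a triangulation of the $\infty$-gon is a maximal set of pairwise non-crossing arcs with integer endpoints; it is locally finite if each integer is an endpoint of only finitely many of its arcs. Subcategories are full, additive, closed under isomorphisms and summands. $\mathcal{T}$ is precovering if every object $M$ of $\mathcal{C}_2$ admits a right $\mathcal{T}$-approximation, i.e. a morphism $T\to M$ with $T\in\mathcal{T}$ through which every morphism $T'\to M$ with $T'\in\mathcal{T}$ factors. *)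

theory Defs
  imports Complex_Main
begin

text \<open>Homogeneous components of graded modules are realised as complex subspaces
of the fixed complex vector space of all functions nat to complex (which has
countably-infinite-and-more dimension, so every finitely generated graded module,
whose components are finite-dimensional, has an isomorphic copy here).\<close>

type_synonym vec = "nat \<Rightarrow> complex"

definition vzero :: vec where "vzero = (\<lambda>_. 0)"
definition vadd :: "vec \<Rightarrow> vec \<Rightarrow> vec" where "vadd u v = (\<lambda>i. u i + v i)"
definition vsc :: "complex \<Rightarrow> vec \<Rightarrow> vec" where "vsc c v = (\<lambda>i. c * v i)"

definition csubspace :: "vec set \<Rightarrow> bool" where
  "csubspace S \<longleftrightarrow> vzero \<in> S \<and> (\<forall>u\<in>S. \<forall>v\<in>S. vadd u v \<in> S) \<and> (\<forall>c. \<forall>v\<in>S. vsc c v \<in> S)"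

definition clinear_on :: "vec set \<Rightarrow> (vec \<Rightarrow> vec) \<Rightarrow> bool" where
  "clinear_on S f \<longleftrightarrow> (\<forall>u\<in>S. \<forall>v\<in>S. f (vadd u v) = vadd (f u) (f v)) \<and> (\<forall>c. \<forall>v\<in>S. f (vsc c v) = vsc c (f v))"

definition cspan :: "vec set \<Rightarrow> vec set" where
  "cspan S = {v. \<exists>F c. finite F \<and> F \<subseteq> S \<and> v = (\<lambda>i. \<Sum>s\<in>F. c s * s i)}"

section \<open>Graded modules over R = C[x,y]/(x^2), deg x = 1, deg y = -1\<close>

record gmod =
  comp :: "int \<Rightarrow> vec set"
  xa :: "int \<Rightarrow> vec \<Rightarrow> vec"
  ya :: "int \<Rightarrow> vec \<Rightarrow> vec"

definition graded_module :: "gmod \<Rightarrow> bool" where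
  "graded_module M \<longleftrightarrow>
     (\<forall>n. csubspace (comp M n)) \<and>
     (\<forall>n. clinear_on (comp M n) (xa M n) \<and> xa M n ` comp M n \<subseteq> comp M (n + 1)) \<and>
     (\<forall>n. clinear_on (comp M n) (ya M n) \<and> ya M n ` comp M n \<subseteq> comp M (n - 1)) \<and>
     (\<forall>n. \<forall>v\<in>comp M n. ya M (n + 1) (xa M n v) = xa M (n - 1) (ya M n v)) \<and>
     (\<forall>n. \<forall>v\<in>comp M n. xa M (n + 1) (xa M n v) = vzero)"

fun xpow :: "gmod \<Rightarrow> nat \<Rightarrow> int \<Rightarrow> vec \<Rightarrow> vec" where
  "xpow M 0 d v = v"
| "xpow M (Suc b) d v = xa M (d + int b) (xpow M b d v)"

fun ypow :: "gmod \<Rightarrow> nat \<Rightarrow> int \<Rightarrow> vec \<Rightarrow> vec" where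
  "ypow M 0 d v = v"
| "ypow M (Suc a) d v = ya M (d - int a) (ypow M a d v)"

definition fin_gen :: "gmod \<Rightarrow> bool" where
  "fin_gen M \<longleftrightarrow> (\<exists>G. finite G \<and> (\<forall>(d, g)\<in>G. g \<in> comp M d) \<and>
     (\<forall>n. comp M n = cspan {ypow M a (d + int b) (xpow M b d g) | a b d g.
                               (d, g) \<in> G \<and> d + int b - int a = n}))"

text \<open>Maximal Cohen-Macaulay (R has Krull dimension 1): the homogeneous parameter y is
a nonzerodivisor on M, i.e. depth M = 1.\<close>
definition MCM :: "gmod \<Rightarrow> bool" where
  "MCM M \<longleftrightarrow> (\<forall>n. \<forall>v\<in>comp M n. ya M n v = vzero \<longrightarrow> v = vzero)"

definition C2obj :: "gmod \<Rightarrow> bool" where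
  "C2obj M \<longleftrightarrow> graded_module M \<and> fin_gen M \<and> MCM M"

type_synonym gmor = "int \<Rightarrow> vec \<Rightarrow> vec"

definition hom :: "gmod \<Rightarrow> gmod \<Rightarrow> gmor \<Rightarrow> bool" where
  "hom M N f \<longleftrightarrow>
     (\<forall>n. clinear_on (comp M n) (f n) \<and> f n ` comp M n \<subseteq> comp N n) \<and>
     (\<forall>n. \<forall>v\<in>comp M n. f (n + 1) (xa M n v) = xa N n (f n v)) \<and>
     (\<forall>n. \<forall>v\<in>comp M n. f (n - 1) (ya M n v) = ya N n (f n v))"

definition meq :: "gmod \<Rightarrow> gmor \<Rightarrow> gmor \<Rightarrow> bool" where
  "meq M f g \<longleftrightarrow> (\<forall>n. \<forall>v\<in>comp M n. f n v = g n v)"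

definition mcomp :: "gmor \<Rightarrow> gmor \<Rightarrow> gmor" where
  "mcomp g f = (\<lambda>n v. g n (f n v))"

definition mid :: gmor where "mid = (\<lambda>n v. v)"
definition mzero :: gmor where "mzero = (\<lambda>n v. vzero)"

definition is_dsum :: "gmod \<Rightarrow> nat \<Rightarrow> (nat \<Rightarrow> gmod) \<Rightarrow> bool" where
  "is_dsum M k N \<longleftrightarrow> (\<exists>\<iota> \<pi> :: nat \<Rightarrow> gmor.
     (\<forall>i<k. hom (N i) M (\<iota> i) \<and> hom M (N i) (\<pi> i)) \<and>
     (\<forall>i<k. \<forall>j<k. meq (N j) (mcomp (\<pi> i) (\<iota> j)) (if i = j then mid else mzero)) \<and>
     meq M (\<lambda>n v. (\<lambda>t. \<Sum>i<k. \<iota> i n (\<pi> i n v) t)) mid)"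

text \<open>The module (x,y^k)(j). An element of R_m is c0 y^(-m) + c1 x y^(1-m)
(the first term present only if m \<le> 0, the second only if m \<le> 1); it is encoded as
the vector with entries c0 at 0 and c1 at 1. The ideal (x,y^k) has in degree m the
elements with c0 = 0 unless -m \<ge> k. The shift is M(j)_n = M_(j+n).\<close>
definition idl_mod :: "nat \<Rightarrow> int \<Rightarrow> gmod" where
  "idl_mod k j = \<lparr> comp = (\<lambda>n. {v. (\<forall>i\<ge>2. v i = 0) \<and>
                                       (\<not> (j + n \<le> - int k) \<longrightarrow> v 0 = 0) \<and>
                                       (\<not> (j + n \<le> 1) \<longrightarrow> v 1 = 0)}),
                   xa = (\<lambda>n v. (\<lambda>i. if i = 1 then v 0 else 0)),
                   ya = (\<lambda>n v. v) \<rparr>"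

text \<open>Arcs (a,b) with integer endpoints a < b; the arc (-j-k, 1-j) corresponds to
(x,y^k)(j), i.e. (a,b) corresponds to (x,y^(b-1-a))(1-b).\<close>
definition arc_mod :: "int \<times> int \<Rightarrow> gmod" where
  "arc_mod ab = idl_mod (nat (snd ab - 1 - fst ab)) (1 - snd ab)"

definition is_arc :: "int \<times> int \<Rightarrow> bool" where
  "is_arc ab \<longleftrightarrow> fst ab < snd ab"

definition crosses :: "int \<times> int \<Rightarrow> int \<times> int \<Rightarrow> bool" where
  "crosses ab cd \<longleftrightarrow> (let (a, b) = ab; (c, d) = cd in
      (a < c \<and> c < b \<and> b < d) \<or> (c < a \<and> a < d \<and> d < b))"

definition triangulation :: "(int \<times> int) set \<Rightarrow> bool" where
  "triangulation T \<longleftrightarrow> (\<forall>\<alpha>\<in>T. is_arc \<alpha>) \<and>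
     (\<forall>\<alpha>\<in>T. \<forall>\<beta>\<in>T. \<not> crosses \<alpha> \<beta>) \<and>
     (\<forall>\<gamma>. is_arc \<gamma> \<and> \<gamma> \<notin> T \<longrightarrow> (\<exists>\<alpha>\<in>T. crosses \<alpha> \<gamma>))"

definition locally_finite :: "(int \<times> int) set \<Rightarrow> bool" where
  "locally_finite T \<longleftrightarrow> (\<forall>n. finite {\<alpha>\<in>T. fst \<alpha> = n \<or> snd \<alpha> = n})"

definition arc_subcat :: "(int \<times> int) set \<Rightarrow> gmod \<Rightarrow> bool" where
  "arc_subcat T M \<longleftrightarrow> C2obj M \<and>
     (\<exists>k N. (\<forall>i<k. \<exists>\<alpha>\<in>T. N i = arc_mod \<alpha>) \<and> is_dsum M k N)"

definition right_approx :: "(gmod \<Rightarrow> bool) \<Rightarrow> gmod \<Rightarrow> gmod \<Rightarrow> gmor \<Rightarrow> bool" where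
  "right_approx \<T> M X f \<longleftrightarrow> \<T> X \<and> hom X M f \<and>
     (\<forall>Y g. \<T> Y \<and> hom Y M g \<longrightarrow> (\<exists>h. hom Y X h \<and> meq Y g (mcomp f h)))"

definition left_approx :: "(gmod \<Rightarrow> bool) \<Rightarrow> gmod \<Rightarrow> gmod \<Rightarrow> gmor \<Rightarrow> bool" where
  "left_approx \<T> M X f \<longleftrightarrow> \<T> X \<and> hom M X f \<and>
     (\<forall>Y g. \<T> Y \<and> hom M Y g \<longrightarrow> (\<exists>h. hom X Y h \<and> meq M g (mcomp h f)))"

definition precovering :: "(gmod \<Rightarrow> bool) \<Rightarrow> bool" where
  "precovering \<T> \<longleftrightarrow> (\<forall>M. C2obj M \<longrightarrow> (\<exists>X f. right_approx \<T> M X f))"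

definition preenveloping :: "(gmod \<Rightarrow> bool) \<Rightarrow> bool" where
  "preenveloping \<T> \<longleftrightarrow> (\<forall>M. C2obj M \<longrightarrow> (\<exists>X f. left_approx \<T> M X f))"

definition functorially_finite :: "(gmod \<Rightarrow> bool) \<Rightarrow> bool" where
  "functorially_finite \<T> \<longleftrightarrow> precovering \<T> \<and> preenveloping \<T>"

end

theory Submission
  imports Defs
begin

(* Let C[y] = R/(x) be the module of the arc (-\<infinity>, 0). Suppose f : X \<rightarrow> C[y] is a right
   approximation, X a finite sum of modules of arcs (a_i, b_i) of T. Every arc of a locally finite
   triangulation lies strictly inside another one, so infinitely many arcs of T pass over 0, and
   local finiteness yields one, (a, b) with a \<le> 0 < b, whose end b exceeds every b_i. The quotient
   map from its module onto C[y] would factor through X. But a map from the module of (a, b) to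
   that of (a_i, b_i) with b_i < b sends the generator into the x-part, and every map to C[y]
   kills the x-part; so the generator would map to zero. *)

lemma crosses_iff:
  "crosses (a, b) (c, d) \<longleftrightarrow> a < c \<and> c < b \<and> b < d \<or> c < a \<and> a < d \<and> d < b"
  by (simp add: crosses_def)

lemma triangulation_edge:
  assumes "triangulation T"
  shows "(p, p + 1) \<in> T"
proof (rule ccontr)
  assume "(p, p + 1) \<notin> T"
  moreover have "is_arc (p, p + 1)"
    by (simp add: is_arc_def)
  ultimately obtain \<alpha> where "crosses \<alpha> (p, p + 1)"
    using assms unfolding triangulation_def by blast
  then show False
    by (cases \<alpha>) (auto simp: crosses_iff)
qed

lemma locally_finite_left_end_below:
  assumes "locally_finite T"
  shows "\<exists>c < a. (\<forall>a'. (a', a) \<in> T \<longrightarrow> c \<le> a') \<and> (c = a - 1 \<or> (c, a) \<in> T)"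
proof -
  define A where "A = {a'. (a', a) \<in> T}"
  have "A \<subseteq> fst ` {\<alpha>\<in>T. fst \<alpha> = a \<or> snd \<alpha> = a}"
    by (force simp: A_def)
  then have "finite A"
    using assms unfolding locally_finite_def by (meson finite_imageI finite_subset)
  define c where "c = Min (insert (a - 1) A)"
  have "c \<le> a - 1"
    using \<open>finite A\<close> unfolding c_def by (meson Min_le finite_insert insertI1)
  moreover have "c \<le> a'" if "(a', a) \<in> T" for a'
    using \<open>finite A\<close> that by (simp add: c_def A_def)
  moreover have "c \<in> insert (a - 1) A"
    using \<open>finite A\<close> unfolding c_def by (meson Min_in finite_insert insert_not_empty)
  ultimately show ?thesis
    by (auto simp: A_def)
qed

lemma triangulation_no_crossing_widened_arc:
  assumes tri: "triangulation T" and ab: "(a, b) \<in> T"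
    and maximal: "\<And>c d. (c, d) \<in> T \<Longrightarrow> c \<le> a \<Longrightarrow> b \<le> d \<Longrightarrow> c = a \<and> d = b"
    and "c < a" and c_le: "\<And>a'. (a', a) \<in> T \<Longrightarrow> c \<le> a'" and "c = a - 1 \<or> (c, a) \<in> T"
    and a'b': "(a', b') \<in> T"
  shows "\<not> crosses (a', b') (c, b)"
proof
  have nc: "\<And>\<alpha> \<beta>. \<alpha> \<in> T \<Longrightarrow> \<beta> \<in> T \<Longrightarrow> \<not> crosses \<alpha> \<beta>"
    using tri by (simp add: triangulation_def)
  assume "crosses (a', b') (c, b)"
  then consider "a' < c" "c < b'" "b' < b" | "c < a'" "a' < b" "b < b'"
    by (auto simp: crosses_iff)
  then show False
  proof cases
    case 1
    consider "a < b'" | "b' = a" | "b' < a"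
      by linarith
    then show False
    proof cases
      case 1
      then have "crosses (a', b') (a, b)"
        using \<open>a' < c\<close> \<open>c < a\<close> \<open>b' < b\<close> by (simp add: crosses_iff)
      then show False
        using nc a'b' ab by blast
    next
      case 2
      then show False
        using c_le[of a'] a'b' \<open>a' < c\<close> by simp
    next
      case 3
      then have "crosses (a', b') (c, a)" and "(c, a) \<in> T"
        using \<open>a' < c\<close> \<open>c < b'\<close> \<open>c = a - 1 \<or> (c, a) \<in> T\<close> by (auto simp: crosses_iff)
      then show False
        using nc a'b' by blast
    qed
  next
    case 2
    then show False
      using maximal[of a' b'] nc[OF ab a'b'] a'b' by (cases "a' \<le> a") (auto simp: crosses_iff)
  qed
qed

lemma locally_finite_triangulation_larger_arc:
  assumes tri: "triangulation T" and lf: "locally_finite T" and ab: "(a, b) \<in> T"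
  shows "\<exists>(c, d)\<in>T. c \<le> a \<and> b \<le> d \<and> (c, d) \<noteq> (a, b)"
proof (rule ccontr)
  assume "\<not> ?thesis"
  then have maximal: "\<And>c d. (c, d) \<in> T \<Longrightarrow> c \<le> a \<Longrightarrow> b \<le> d \<Longrightarrow> c = a \<and> d = b"
    by blast
  (* Widening (a, b) to the left beyond every arc of T ending at a gives an arc that no arc of T
     crosses, although it is not in T. *)
  obtain c where c: "c < a" "\<And>a'. (a', a) \<in> T \<Longrightarrow> c \<le> a'" "c = a - 1 \<or> (c, a) \<in> T"
    using locally_finite_left_end_below[OF lf, of a] by blast
  have "(c, b) \<notin> T"
    using maximal[of c b] \<open>c < a\<close> by auto
  moreover have "is_arc (a, b)"
    using tri ab by (simp add: triangulation_def)
  then have "is_arc (c, b)"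
    using \<open>c < a\<close> by (simp add: is_arc_def)
  moreover have "\<And>\<gamma>. is_arc \<gamma> \<Longrightarrow> \<gamma> \<notin> T \<Longrightarrow> \<exists>\<alpha>\<in>T. crosses \<alpha> \<gamma>"
    using tri unfolding triangulation_def by blast
  ultimately obtain \<alpha> where "\<alpha> \<in> T" and "crosses \<alpha> (c, b)"
    by blast
  then show False
    using triangulation_no_crossing_widened_arc[OF tri ab maximal c] by (cases \<alpha>) simp
qed

lemma locally_finite_triangulation_infinite_arcs_over:
  assumes tri: "triangulation T" and lf: "locally_finite T"
  shows "infinite {(a, b) \<in> T. a \<le> p \<and> p < b}"
    (is "infinite ?S")
proof
  assume "finite ?S"
  moreover have "(p, p + 1) \<in> ?S"
    using triangulation_edge[OF tri] by simp
  ultimately obtain \<alpha> where "is_arg_min (\<lambda>(a, b). a - b) (\<lambda>\<alpha>. \<alpha> \<in> ?S) \<alpha>"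
    using ex_is_arg_min_if_finite by blast
  then obtain a b where ab: "(a, b) \<in> ?S" and longest: "\<And>c d. (c, d) \<in> ?S \<Longrightarrow> c - d \<ge> a - b"
    unfolding is_arg_min_def by (cases \<alpha>) fastforce
  obtain c d where "(c, d) \<in> T" "c \<le> a" "b \<le> d" "(c, d) \<noteq> (a, b)"
    using locally_finite_triangulation_larger_arc[OF tri lf, of a b] ab by blast
  then have "(c, d) \<in> ?S"
    using ab by auto
  moreover have "c - d < a - b"
    using \<open>c \<le> a\<close> \<open>b \<le> d\<close> \<open>(c, d) \<noteq> (a, b)\<close> by auto
  ultimately show False
    using longest by fastforce
qed

lemma locally_finite_triangulation_long_arc_over:
  assumes tri: "triangulation T" and lf: "locally_finite T"
  shows "\<exists>(a, b)\<in>T. a \<le> p \<and> p < b \<and> B < b"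
proof -
  let ?S = "{(a, b) \<in> T. a \<le> p \<and> p < b}"
  have "{(a, b) \<in> ?S. b \<le> B} \<subseteq> (\<Union>n\<in>{p<..B}. {\<alpha>\<in>T. fst \<alpha> = n \<or> snd \<alpha> = n})"
    by auto
  moreover have "finite (\<Union>n\<in>{p<..B}. {\<alpha>\<in>T. fst \<alpha> = n \<or> snd \<alpha> = n})"
    using lf unfolding locally_finite_def by blast
  ultimately have "finite {(a, b) \<in> ?S. b \<le> B}"
    by (rule finite_subset)
  then have "\<not> ?S \<subseteq> {(a, b) \<in> ?S. b \<le> B}"
    using locally_finite_triangulation_infinite_arcs_over[OF tri lf, of p] finite_subset by blast
  then show ?thesis
    by auto
qed

(* In the encoding of idl_mod, e0 stands for the monomial y^(-m) and e1 for x y^(1-m) in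
   degree m. *)
definition e0 :: vec where "e0 = (\<lambda>i. if i = 0 then 1 else 0)"
definition e1 :: vec where "e1 = (\<lambda>i. if i = 1 then 1 else 0)"

lemma e01_distinct [simp]: "e0 \<noteq> e1" "e1 \<noteq> e0" "e0 \<noteq> vzero" "e1 \<noteq> vzero"
  by (auto simp: e0_def e1_def vzero_def fun_eq_iff)

lemma e01_apply: "e0 i = (if i = 0 then 1 else 0)" "e1 i = (if i = 1 then 1 else 0)" "vzero i = 0"
  by (simp_all add: e0_def e1_def vzero_def)

(* C[y] = R/(x), the module of the arc (-\<infinity>, 0): its degree-n part is spanned by y^(-n) for
   n \<le> 0. *)
definition Cy_mod :: gmod where
  "Cy_mod = \<lparr> comp = (\<lambda>n. {v. (\<forall>i\<ge>2. v i = 0) \<and> (\<not> n \<le> 0 \<longrightarrow> v 0 = 0) \<and> v 1 = 0}),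
              xa = (\<lambda>n v. vzero), ya = (\<lambda>n v. v) \<rparr>"

definition mod_x :: gmor where
  "mod_x = (\<lambda>n v. (\<lambda>i. if i = 0 then v 0 else 0))"

lemma arc_mod_comp:
  "is_arc (a, b) \<Longrightarrow> comp (arc_mod (a, b)) n =
     {v. (\<forall>i\<ge>2. v i = 0) \<and> (\<not> n \<le> a \<longrightarrow> v 0 = 0) \<and> (\<not> n \<le> b \<longrightarrow> v 1 = 0)}"
  by (auto simp: arc_mod_def idl_mod_def is_arc_def)

lemma arc_mod_xa: "xa (arc_mod ab) n v = (\<lambda>i. if i = 1 then v 0 else 0)"
  by (simp add: arc_mod_def idl_mod_def)

lemma arc_mod_ya [simp]: "ya (arc_mod ab) n v = v"
  by (simp add: arc_mod_def idl_mod_def)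

lemma arc_mod_xa_e01 [simp]:
  "xa (arc_mod ab) n e0 = e1" "xa (arc_mod ab) n e1 = vzero" "xa (arc_mod ab) n vzero = vzero"
  by (auto simp: arc_mod_xa e0_def e1_def vzero_def)

lemma arc_mod_e0: "is_arc (a, b) \<Longrightarrow> n \<le> a \<Longrightarrow> e0 \<in> comp (arc_mod (a, b)) n"
  and arc_mod_e1: "is_arc (a, b) \<Longrightarrow> n \<le> b \<Longrightarrow> e1 \<in> comp (arc_mod (a, b)) n"
  by (simp_all add: arc_mod_comp e0_def e1_def)

lemma Cy_mod_simps [simp]:
  "comp Cy_mod n = {v. (\<forall>i\<ge>2. v i = 0) \<and> (\<not> n \<le> 0 \<longrightarrow> v 0 = 0) \<and> v 1 = 0}"
  "xa Cy_mod n v = vzero" "ya Cy_mod n v = v"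
  by (simp_all add: Cy_mod_def)

lemma cspan_coord_zero:
  assumes "v \<in> cspan S" and "\<forall>s\<in>S. s i = 0"
  shows "v i = 0"
proof -
  obtain F c where "F \<subseteq> S" and "v = (\<lambda>i. \<Sum>s\<in>F. c s * s i)"
    using assms(1) unfolding cspan_def by blast
  moreover have "\<forall>s\<in>F. c s * s i = 0"
    using \<open>F \<subseteq> S\<close> assms(2) by auto
  ultimately show ?thesis
    by (simp add: sum.neutral)
qed

lemma in_cspan_e01:
  assumes "\<forall>i\<ge>2. v i = 0" and "e0 \<notin> S \<Longrightarrow> v 0 = 0" and "e1 \<notin> S \<Longrightarrow> v 1 = 0"
  shows "v \<in> cspan S"
proof -
  let ?c = "\<lambda>s. if s = e0 then v 0 else v 1"
  have combination: "v = (\<lambda>i. \<Sum>s\<in>S \<inter> {e0, e1}. ?c s * s i)"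
  proof
    fix i :: nat
    consider "i = 0" | "i = 1" | "2 \<le> i"
      by linarith
    then show "v i = (\<Sum>s\<in>S \<inter> {e0, e1}. ?c s * s i)"
    proof cases
      case 1
      then show ?thesis
        using assms by (cases "e0 \<in> S"; cases "e1 \<in> S") (simp_all add: e01_apply)
    next
      case 2
      then show ?thesis
        using assms by (cases "e0 \<in> S"; cases "e1 \<in> S") (simp_all add: e01_apply)
    next
      case 3
      then have "\<forall>s\<in>{e0, e1}. s i = 0"
        by (auto simp: e01_apply)
      then have "(\<Sum>s\<in>S \<inter> {e0, e1}. ?c s * s i) = 0"
        by (intro sum.neutral) auto
      then show ?thesis
        using assms(1) 3 by simp
    qed
  qed
  show ?thesis
    unfolding cspan_def mem_Collect_eq
    by (rule exI[of _ "S \<inter> {e0, e1}"], rule exI[of _ ?c]) (simp add: combination)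
qed

lemma cspan_e01:
  assumes "S \<subseteq> {vzero, e0, e1}"
  shows "cspan S = {v. (\<forall>i\<ge>2. v i = 0) \<and> (e0 \<notin> S \<longrightarrow> v 0 = 0) \<and> (e1 \<notin> S \<longrightarrow> v 1 = 0)}"
proof (intro set_eqI iffI)
  fix v assume v: "v \<in> cspan S"
  have S: "s = vzero \<or> s = e0 \<or> s = e1" if "s \<in> S" for s
    using assms that by blast
  have "\<forall>s\<in>S. s i = 0" if "2 \<le> i" for i
    using S that by (fastforce simp: e01_apply)
  moreover have "\<forall>s\<in>S. s 0 = 0" if "e0 \<notin> S"
    using S that by (fastforce simp: e01_apply)
  moreover have "\<forall>s\<in>S. s 1 = 0" if "e1 \<notin> S"
    using S that by (fastforce simp: e01_apply)
  ultimately show "v \<in> {v. (\<forall>i\<ge>2. v i = 0) \<and> (e0 \<notin> S \<longrightarrow> v 0 = 0) \<and> (e1 \<notin> S \<longrightarrow> v 1 = 0)}"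
    using cspan_coord_zero[OF v] by blast
qed (auto intro: in_cspan_e01)

lemma ypow_ya_id: "(\<And>n v. ya M n v = v) \<Longrightarrow> ypow M m d v = v"
  by (induction m) auto

lemma fin_genI_ya_id:
  assumes "\<And>n v. ya M n v = v" and "finite G" and "\<forall>(d, g)\<in>G. g \<in> comp M d"
    and "\<And>n. comp M n = cspan {xpow M b d g | a b d g. (d, g) \<in> G \<and> d + int b - int a = n}"
  shows "fin_gen M"
proof -
  have "\<forall>n. comp M n = cspan {ypow M a (d + int b) (xpow M b d g) | a b d g.
                                (d, g) \<in> G \<and> d + int b - int a = n}"
    using assms(4) by (simp add: ypow_ya_id[OF assms(1)])
  then show ?thesis
    unfolding fin_gen_def using assms(2,3) by blast
qed

lemma generator_mem_generated:
  assumes "(d, g) \<in> G" and "n \<le> d"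
  shows "g \<in> {xpow M t d' g' | s t d' g'. (d', g') \<in> G \<and> d' + int t - int s = n}"
proof -
  have "g = xpow M 0 d g \<and> (d, g) \<in> G \<and> d + int 0 - int (nat (d - n)) = n"
    using assms by simp
  then show ?thesis
    by blast
qed

lemma xpow_arc_mod:
  "xpow (arc_mod ab) t d e0 = (if t = 0 then e0 else if t = 1 then e1 else vzero)"
  "xpow (arc_mod ab) t d e1 = (if t = 0 then e1 else vzero)"
proof (induction t)
  case (Suc t)
  show "xpow (arc_mod ab) (Suc t) d e0 = (if Suc t = 0 then e0 else if Suc t = 1 then e1 else vzero)"
    and "xpow (arc_mod ab) (Suc t) d e1 = (if Suc t = 0 then e1 else vzero)"
    using Suc by auto
qed simp_all

lemma xpow_arc_mod_e01: "g \<in> {vzero, e0, e1} \<Longrightarrow> xpow (arc_mod ab) t d g \<in> {vzero, e0, e1}"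
  by (induction t) auto

lemma xpow_Cy_mod: "xpow Cy_mod t d v = (if t = 0 then v else vzero)"
  by (induction t) auto

lemma fin_gen_arc_mod:
  assumes arc: "is_arc (a, b)"
  shows "fin_gen (arc_mod (a, b))"
proof (rule fin_genI_ya_id)
  show "\<forall>(d, g)\<in>{(a, e0), (b, e1)}. g \<in> comp (arc_mod (a, b)) d"
    using arc by (auto intro: arc_mod_e0 arc_mod_e1)
  fix n
  let ?X = "{xpow (arc_mod (a, b)) t d g | s t d g. (d, g) \<in> {(a, e0), (b, e1)} \<and> d + int t - int s = n}"
  have "?X \<subseteq> {vzero, e0, e1}"
  proof
    fix v assume "v \<in> ?X"
    then obtain t d g where "v = xpow (arc_mod (a, b)) t d g" and "g \<in> {vzero, e0, e1}"
      by blast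
    then show "v \<in> {vzero, e0, e1}"
      using xpow_arc_mod_e01 by simp
  qed
  moreover have "e0 \<in> ?X \<longleftrightarrow> n \<le> a"
    using generator_mem_generated[of a e0 "{(a, e0), (b, e1)}" n "arc_mod (a, b)"]
    by (auto simp: xpow_arc_mod split: if_splits)
  moreover have "e1 \<in> ?X \<longleftrightarrow> n \<le> b"
    using generator_mem_generated[of b e1 "{(a, e0), (b, e1)}" n "arc_mod (a, b)"] arc
    by (auto simp: xpow_arc_mod is_arc_def split: if_splits)
  ultimately show "comp (arc_mod (a, b)) n = cspan ?X"
    using arc by (simp add: cspan_e01 arc_mod_comp)
qed simp_all

lemma fin_gen_Cy_mod: "fin_gen Cy_mod"
proof (rule fin_genI_ya_id)
  show "\<forall>(d, g)\<in>{(0, e0)}. g \<in> comp Cy_mod d"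
    by (simp add: e0_def)
  fix n
  let ?X = "{xpow Cy_mod t d g | s t d g. (d, g) \<in> {(0, e0)} \<and> d + int t - int s = n}"
  have "?X \<subseteq> {vzero, e0, e1}"
    by (auto simp: xpow_Cy_mod)
  moreover have "e0 \<in> ?X \<longleftrightarrow> n \<le> 0"
    using generator_mem_generated[of 0 e0 "{(0, e0)}" n Cy_mod]
    by (auto simp: xpow_Cy_mod split: if_splits)
  moreover have "e1 \<notin> ?X"
    by (auto simp: xpow_Cy_mod)
  ultimately show "comp Cy_mod n = cspan ?X"
    by (simp add: cspan_e01)
qed simp_all

lemma C2obj_arc_mod: "is_arc (a, b) \<Longrightarrow> C2obj (arc_mod (a, b))"
  unfolding C2obj_def MCM_def graded_module_def csubspace_def clinear_on_def
  by (auto simp: fin_gen_arc_mod arc_mod_comp arc_mod_xa vzero_def vadd_def vsc_def is_arc_def)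

lemma C2obj_Cy_mod: "C2obj Cy_mod"
  unfolding C2obj_def MCM_def graded_module_def csubspace_def clinear_on_def
  by (auto simp: fin_gen_Cy_mod vzero_def vadd_def vsc_def)

lemma hom_mem: "hom M N f \<Longrightarrow> v \<in> comp M n \<Longrightarrow> f n v \<in> comp N n"
  unfolding hom_def by blast

lemma hom_clinear_on: "hom M N f \<Longrightarrow> clinear_on (comp M n) (f n)"
  unfolding hom_def by blast

lemma hom_xa: "hom M N f \<Longrightarrow> v \<in> comp M n \<Longrightarrow> f (n + 1) (xa M n v) = xa N n (f n v)"
  unfolding hom_def by blast

lemma hom_ya: "hom M N f \<Longrightarrow> v \<in> comp M n \<Longrightarrow> f (n - 1) (ya M n v) = ya N n (f n v)"
  unfolding hom_def by blast

lemma hom_mcomp: "hom A B p \<Longrightarrow> hom B C q \<Longrightarrow> hom A C (mcomp q p)"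
  unfolding hom_def mcomp_def clinear_on_def by (simp add: image_subset_iff)

lemma hom_mid: "hom M M mid"
  unfolding hom_def clinear_on_def mid_def by simp

lemma clinear_on_vzero:
  assumes "clinear_on S f" and "vzero \<in> S"
  shows "f vzero = vzero"
proof -
  have "f vzero = f (vsc 0 vzero)"
    by (simp add: vsc_def vzero_def)
  also have "\<dots> = vsc 0 (f vzero)"
    using assms unfolding clinear_on_def by blast
  also have "\<dots> = vzero"
    by (simp add: vsc_def vzero_def)
  finally show ?thesis .
qed

lemma csubspace_sum:
  assumes "csubspace S" and "finite I" and "\<forall>i\<in>I. w i \<in> S"
  shows "(\<lambda>t. \<Sum>i\<in>I. w i t) \<in> S"
  using assms(2,3)
proof (induction I rule: finite_induct)
  case empty
  then show ?case
    using assms(1) by (simp add: csubspace_def vzero_def)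
next
  case (insert j I)
  then have "vadd (w j) (\<lambda>t. \<Sum>i\<in>I. w i t) \<in> S"
    using assms(1) by (simp add: csubspace_def)
  then show ?case
    using insert by (simp add: vadd_def)
qed

lemma clinear_on_sum:
  assumes "clinear_on S f" and "csubspace S" and "finite I" and "\<forall>i\<in>I. w i \<in> S"
  shows "f (\<lambda>t. \<Sum>i\<in>I. w i t) = (\<lambda>t. \<Sum>i\<in>I. f (w i) t)"
  using assms(3,4)
proof (induction I rule: finite_induct)
  case empty
  then show ?case
    using clinear_on_vzero[OF assms(1)] assms(2) by (simp add: csubspace_def vzero_def)
next
  case (insert j I)
  have "(\<lambda>t. \<Sum>i\<in>insert j I. w i t) = vadd (w j) (\<lambda>t. \<Sum>i\<in>I. w i t)"
    using insert by (simp add: vadd_def)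
  moreover have "(\<lambda>t. \<Sum>i\<in>I. w i t) \<in> S" and "w j \<in> S"
    using csubspace_sum[OF assms(2) \<open>finite I\<close>, of w] insert.prems by simp_all
  then have "f (vadd (w j) (\<lambda>t. \<Sum>i\<in>I. w i t)) = vadd (f (w j)) (f (\<lambda>t. \<Sum>i\<in>I. w i t))"
    using assms(1) unfolding clinear_on_def by blast
  ultimately show ?case
    using insert by (simp add: vadd_def)
qed

lemma is_dsum_single: "is_dsum M 1 (\<lambda>_. M)"
  unfolding is_dsum_def
proof (intro exI conjI)
  show "\<forall>i<1. hom M M mid \<and> hom M M mid"
    using hom_mid by blast
qed (simp_all add: meq_def mcomp_def mid_def)

lemma arc_subcat_arc_mod:
  assumes "\<alpha> \<in> T" and "is_arc \<alpha>"
  shows "arc_subcat T (arc_mod \<alpha>)"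
  unfolding arc_subcat_def
proof (intro conjI exI)
  show "C2obj (arc_mod \<alpha>)"
    using assms(2) C2obj_arc_mod[of "fst \<alpha>" "snd \<alpha>"] by simp
  show "\<forall>i<1. \<exists>\<beta>\<in>T. arc_mod \<alpha> = arc_mod \<beta>"
    using assms(1) by blast
qed (rule is_dsum_single)

lemma hom_mod_x: "is_arc (a, b) \<Longrightarrow> a \<le> 0 \<Longrightarrow> hom (arc_mod (a, b)) Cy_mod mod_x"
  unfolding hom_def clinear_on_def
  by (auto simp: mod_x_def arc_mod_comp arc_mod_xa vadd_def vsc_def vzero_def fun_eq_iff)

lemma mod_x_e0 [simp]: "mod_x n e0 = e0"
  by (simp add: mod_x_def e0_def fun_eq_iff)

lemma hom_arc_mod_e1_shift:
  assumes arc: "is_arc (a, b)" and q: "hom (arc_mod (a, b)) N q" and N: "\<And>n v. ya N n v = v"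
    and "m \<le> n" and "n \<le> b"
  shows "q m e1 = q n e1"
  using \<open>m \<le> n\<close> \<open>n \<le> b\<close>
proof (induction n rule: int_ge_induct)
  case (step n)
  have "q n e1 = q (n + 1) e1"
    using hom_ya[OF q arc_mod_e1[OF arc step.prems]] N by simp
  then show ?case
    using step by simp
qed simp

(* x maps the generator e0 of degree a' to e1, which y carries unchanged up to degree b' > b,
   where the target has no x-part. *)
lemma hom_arc_mod_shorter_generator:
  assumes arc: "is_arc (a, b)" and arc': "is_arc (a', b')" and "b < b'"
    and p: "hom (arc_mod (a', b')) (arc_mod (a, b)) p"
  shows "p a' e0 0 = 0"
proof -
  have "p (a' + 1) e1 = p b' e1"
    using hom_arc_mod_e1_shift[OF arc' p] arc' by (simp add: is_arc_def)
  moreover have "p b' e1 \<in> comp (arc_mod (a, b)) b'"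
    using hom_mem[OF p arc_mod_e1[OF arc' order_refl]] .
  ultimately have "p (a' + 1) e1 1 = 0"
    using arc \<open>b < b'\<close> by (simp add: arc_mod_comp)
  moreover have "p (a' + 1) e1 = xa (arc_mod (a, b)) a' (p a' e0)"
    using hom_xa[OF p arc_mod_e0[OF arc' order_refl]] by simp
  ultimately show ?thesis
    by (simp add: arc_mod_xa)
qed

(* In degrees up to a + 1, e1 = x e0 and x acts as zero on C[y]; y carries this up to degree b. *)
lemma hom_arc_mod_Cy_mod_e1:
  assumes arc: "is_arc (a, b)" and q: "hom (arc_mod (a, b)) Cy_mod q" and "n \<le> b"
  shows "q n e1 = vzero"
proof (cases "n \<le> a + 1")
  case True
  then show ?thesis
    using hom_xa[OF q arc_mod_e0[OF arc, of "n - 1"]] by simp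
next
  case False
  have "q (a + 1) e1 = vzero"
    using hom_xa[OF q arc_mod_e0[OF arc order_refl]] by simp
  then show ?thesis
    using hom_arc_mod_e1_shift[OF arc q, of "a + 1" n] False \<open>n \<le> b\<close> by simp
qed

lemma hom_arc_mod_Cy_mod_x_part:
  assumes arc: "is_arc (a, b)" and q: "hom (arc_mod (a, b)) Cy_mod q"
    and w: "w \<in> comp (arc_mod (a, b)) n" and "w 0 = 0"
  shows "q n w = vzero"
proof (cases "n \<le> b")
  case True
  have "w = vsc (w 1) e1"
  proof
    fix i :: nat
    show "w i = vsc (w 1) e1 i"
      using w \<open>w 0 = 0\<close> arc
      by (cases "i = 0"; cases "i = 1") (simp_all add: arc_mod_comp vsc_def e01_apply)
  qed
  moreover have "q n (vsc (w 1) e1) = vsc (w 1) (q n e1)"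
    using hom_clinear_on[OF q, of n] arc_mod_e1[OF arc True] unfolding clinear_on_def by blast
  ultimately show ?thesis
    using hom_arc_mod_Cy_mod_e1[OF arc q True] by (simp add: vsc_def vzero_def)
next
  case False
  have "w = vzero"
  proof
    fix i :: nat
    show "w i = vzero i"
      using w \<open>w 0 = 0\<close> arc False
      by (cases "i = 0"; cases "i = 1") (simp_all add: arc_mod_comp e01_apply)
  qed
  moreover have "vzero \<in> comp (arc_mod (a, b)) n"
    using arc by (simp add: arc_mod_comp vzero_def)
  ultimately show ?thesis
    using clinear_on_vzero[OF hom_clinear_on[OF q]] by simp
qed

lemma hom_through_shorter_arc_mod:
  assumes "is_arc (a, b)" and "is_arc (a', b')" and "b < b'"
    and p: "hom (arc_mod (a', b')) (arc_mod (a, b)) p" and q: "hom (arc_mod (a, b)) Cy_mod q"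
  shows "q a' (p a' e0) = vzero"
  using hom_arc_mod_Cy_mod_x_part[OF assms(1) q hom_mem[OF p arc_mod_e0[OF assms(2) order_refl]]]
    hom_arc_mod_shorter_generator[OF assms(1-3) p] .

lemma is_dsum_hom_vanishes:
  assumes X: "graded_module X" and ds: "is_dsum X k N" and f: "hom X M f" and h: "hom Y X h"
    and v: "v \<in> comp Y n"
    and vanish: "\<And>i p q. i < k \<Longrightarrow> hom Y (N i) p \<Longrightarrow> hom (N i) M q \<Longrightarrow> q n (p n v) = vzero"
  shows "f n (h n v) = vzero"
proof -
  obtain \<iota> \<pi> where \<iota>\<pi>: "\<forall>i<k. hom (N i) X (\<iota> i) \<and> hom X (N i) (\<pi> i)"
    and decomp: "meq X (\<lambda>n v. (\<lambda>t. \<Sum>i<k. \<iota> i n (\<pi> i n v) t)) mid"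
    using ds unfolding is_dsum_def by blast
  define w where "w = h n v"
  have w: "w \<in> comp X n"
    unfolding w_def by (rule hom_mem[OF h v])
  have parts: "\<forall>i\<in>{..<k}. \<iota> i n (\<pi> i n w) \<in> comp X n"
    using \<iota>\<pi> w hom_mem by blast
  have part_vanishes: "f n (\<iota> i n (\<pi> i n w)) = vzero" if "i < k" for i
  proof -
    have "hom Y (N i) (mcomp (\<pi> i) h)" and "hom (N i) M (mcomp f (\<iota> i))"
      using \<iota>\<pi> that hom_mcomp h f by blast+
    then have "mcomp f (\<iota> i) n (mcomp (\<pi> i) h n v) = vzero"
      by (rule vanish[OF that])
    then show ?thesis
      by (simp add: mcomp_def w_def)
  qed
  have "csubspace (comp X n)"
    using X unfolding graded_module_def by blast
  have "f n w = f n (\<lambda>t. \<Sum>i<k. \<iota> i n (\<pi> i n w) t)"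
    using decomp w by (simp add: meq_def mid_def)
  also have "\<dots> = (\<lambda>t. \<Sum>i<k. f n (\<iota> i n (\<pi> i n w)) t)"
    using clinear_on_sum[OF hom_clinear_on[OF f] \<open>csubspace (comp X n)\<close> _ parts] by simp
  also have "\<dots> = vzero"
    using part_vanishes by (simp add: vzero_def)
  finally show ?thesis
    by (simp add: w_def)
qed

lemma arc_subcat_hom_Cy_mod_long_arcs:
  assumes arcs: "\<forall>\<alpha>\<in>T. is_arc \<alpha>" and X: "arc_subcat T X" and f: "hom X Cy_mod f"
  obtains B where "\<And>a b h. is_arc (a, b) \<Longrightarrow> B < b \<Longrightarrow> hom (arc_mod (a, b)) X h \<Longrightarrow>
    f a (h a e0) = vzero"
proof -
  obtain k N where "C2obj X" and N: "\<forall>i<k. \<exists>\<alpha>\<in>T. N i = arc_mod \<alpha>" and ds: "is_dsum X k N"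
    using X unfolding arc_subcat_def by blast
  obtain sel where sel: "\<forall>i<k. sel i \<in> T \<and> N i = arc_mod (sel i)"
    using N by metis
  define B where "B = Max (insert 0 ((\<lambda>i. snd (sel i)) ` {..<k}))"
  have B: "snd (sel i) \<le> B" if "i < k" for i
    using that by (simp add: B_def)
  show thesis
  proof (rule that)
    fix a b h
    assume arc: "is_arc (a, b)" and "B < b" and h: "hom (arc_mod (a, b)) X h"
    show "f a (h a e0) = vzero"
    proof (rule is_dsum_hom_vanishes[OF _ ds f h arc_mod_e0[OF arc order_refl]])
      show "graded_module X"
        using \<open>C2obj X\<close> by (simp add: C2obj_def)
      fix i p q
      assume "i < k" and p: "hom (arc_mod (a, b)) (N i) p" and q: "hom (N i) Cy_mod q"
      obtain a' b' where "sel i = (a', b')" and "(a', b') \<in> T"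
        using sel \<open>i < k\<close> by (metis prod.collapse)
      then show "q a (p a e0) = vzero"
        using hom_through_shorter_arc_mod[of a' b' a b p q] arcs arc p q sel B[OF \<open>i < k\<close>]
          \<open>B < b\<close> \<open>i < k\<close> by simp
    qed
  qed
qed

lemma no_right_approx_Cy_mod:
  assumes "triangulation T" and "locally_finite T"
  shows "\<not> right_approx (arc_subcat T) Cy_mod X f"
proof
  assume approx: "right_approx (arc_subcat T) Cy_mod X f"
  have arcs: "\<forall>\<alpha>\<in>T. is_arc \<alpha>"
    using assms(1) by (simp add: triangulation_def)
  have "arc_subcat T X" and "hom X Cy_mod f"
    using approx by (simp_all add: right_approx_def)
  then obtain B where long_arcs_vanish: "\<And>a b h. is_arc (a, b) \<Longrightarrow> B < b \<Longrightarrow>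
      hom (arc_mod (a, b)) X h \<Longrightarrow> f a (h a e0) = vzero"
    using arc_subcat_hom_Cy_mod_long_arcs[OF arcs] by blast
  obtain a b where ab: "(a, b) \<in> T" "a \<le> 0" "B < b"
    using locally_finite_triangulation_long_arc_over[OF assms, of 0 B] by blast
  then have arc: "is_arc (a, b)"
    using arcs by blast
  obtain h where h: "hom (arc_mod (a, b)) X h" and "meq (arc_mod (a, b)) mod_x (mcomp f h)"
    using approx arc_subcat_arc_mod[OF ab(1) arc] hom_mod_x[OF arc ab(2)]
    unfolding right_approx_def by blast
  then have "mod_x a e0 = f a (h a e0)"
    using arc_mod_e0[OF arc order_refl] unfolding meq_def mcomp_def by blast
  then have "e0 = f a (h a e0)"
    by simp
  also have "\<dots> = vzero"
    using long_arcs_vanish[OF arc \<open>B < b\<close> h] .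
  finally show False
    by simp
qed

theorem propositionA6:
  fixes T :: "(int \<times> int) set"
  assumes "triangulation T" and "locally_finite T"
  shows "\<not> precovering (arc_subcat T) \<and> \<not> functorially_finite (arc_subcat T)"
proof -
  have "\<not> precovering (arc_subcat T)"
    using no_right_approx_Cy_mod[OF assms] C2obj_Cy_mod unfolding precovering_def by blast
  then show ?thesis
    by (simp add: functorially_finite_def)
qed

end
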